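(* Let $\Lambda$ be a probability measure on $[0,1]$ with $\Lambda(\{0\})=c>0$, written as $\Lambda=c\delta_0+(1-c)\Lambda_1$ (with $\Lambda_1$ a probability measure with $\Lambda_1(\{0\})=0$ if $c<1$, and $\Lambda_1\equiv0$ if $c=1$). Assume that $$\lim_{q\to\infty}\frac{\Psi_1(q)}{q^{3/2}}=A$$ for some $A\in[0,\infty]$. Then $$\lim_{t\to0+}\frac1{\sqrt t}\left(\frac{ct}{2}v_t-1\right)=-\frac{2\sqrt2}{3\sqrt c}(1-c)A.$$
   Context: $\Psi(q)=\int_{[0,1]}(qy-1+(1-y)^q)\frac{\Lambda(dy)}{y^2}$ for $q\ge1$, the integrand being extended continuously to $y=0$ by the value $q(q-1)/2$; $\Psi_1$ is defined by the same formula with $\Lambda_1$ in place of $\Lambda$ (so $\Psi(q)=c\,q(q-1)/2+(1-c)\Psi_1(q)$). The function $v:(0,\infty)\to(1,\infty)$ is defined by $t=\int_{v_t}^\infty\frac{dq}{\Psi(q)}$. *)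

theory Defs
  imports "HOL-Probability.Probability"
begin

text \<open>The integrand (q y - 1 + (1-y)^q)/y^2, extended continuously to y = 0 by q(q-1)/2.\<close>
definition psi_int :: "real \<Rightarrow> real \<Rightarrow> real" where
  "psi_int q y = (if y = 0 then q * (q - 1) / 2 else (q * y - 1 + (1 - y) powr q) / y\<^sup>2)"

definition Psi :: "real measure \<Rightarrow> real \<Rightarrow> real" where
  "Psi M q = (LINT y:{0..1}|M. psi_int q y)"

end

theory Submission
  imports Defs
begin

text \<open>
  For q >= 2 the exponent splits as Psi(q) = c q^2/2 + R(q) q^(3/2) with
  R(q) = (1 - c) Psi_1(q)/q^(3/2) - c/(2 sqrt q), which tends to (1 - c) A.
  Expanding 1/Psi to second order around 2/(c q^2) gives
  int_v^oo dq/Psi(q) = 2/(c v) - 8 R/(3 c^2 v^(3/2)) + O(1/v^2), so the normalised correction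
  (c/2) v^(3/2) (int_v^oo dq/Psi - 2/(c v)) tends to -4 (1 - c) A/(3 c).
  At v = v_t the integral equals t, and v_t tends to infinity with t v_t -> 2/c, which turns this
  into the limit of (c t v_t/2 - 1)/sqrt t. For A = oo the same one-sided bounds with arbitrarily
  large R drive the correction to -oo.
\<close>

section \<open>The exponent of a point mass mixture\<close>

lemma density_point_mass_mixture:
  fixes M N :: "'a measure"
  assumes "finite_measure M" "finite_measure N" and sets_N: "sets N = sets M"
    and a: "{a} \<in> sets M" and c: "c \<le> 1" and Na: "measure N {a} = 0"
    and mix: "\<And>B. B \<in> sets M \<Longrightarrow> measure M B = c * indicator B a + (1 - c) * measure N B"
  shows "density M (\<lambda>x. ennreal (indicator (space M - {a}) x)) = density N (\<lambda>_. ennreal (1 - c))"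
proof (rule measure_eqI)
  interpret M: finite_measure M by fact
  interpret N: finite_measure N by fact
  define S where "S = space M - {a}"
  have S: "S \<in> sets M" using a by (auto simp: S_def)
  fix X assume "X \<in> sets (density M (\<lambda>x. ennreal (indicator (space M - {a}) x)))"
  then have X[measurable]: "X \<in> sets M" by simp
  have "{a} \<in> null_sets N" using a Na sets_N by (simp add: N.emeasure_eq_measure null_sets_def)
  then have N_X: "emeasure N (X - {a}) = emeasure N X"
    using X sets_N by (simp add: emeasure_Diff_null_set)
  have "emeasure (density M (\<lambda>x. ennreal (indicator S x))) X = ennreal (measure M (S \<inter> X))"
    using S by (simp add: ennreal_indicator emeasure_restricted M.emeasure_eq_measure)
  also have "measure M (S \<inter> X) = (1 - c) * measure N (S \<inter> X)"
    using mix[OF sets.Int[OF S X]] by (simp add: S_def)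
  also have "S \<inter> X = X - {a}" using sets.sets_into_space[OF X] by (auto simp: S_def)
  finally show "emeasure (density M (\<lambda>x. ennreal (indicator (space M - {a}) x))) X
      = emeasure (density N (\<lambda>_. ennreal (1 - c))) X"
    using X sets_N c N_X unfolding S_def
    by (simp add: emeasure_density nn_integral_cmult_indicator N.emeasure_eq_measure ennreal_mult)
qed (simp add: sets_N)

lemma integral_point_mass_mixture:
  fixes M N :: "'a measure" and f :: "'a \<Rightarrow> real"
  assumes "finite_measure M" "finite_measure N" and sets_N: "sets N = sets M"
    and a: "{a} \<in> sets M" and c: "c \<le> 1" and Na: "measure N {a} = 0"
    and mix: "\<And>B. B \<in> sets M \<Longrightarrow> measure M B = c * indicator B a + (1 - c) * measure N B"
    and f_M: "integrable M f" and f_N: "integrable N f"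
  shows "integral\<^sup>L M f = c * f a + (1 - c) * integral\<^sup>L N f"
proof -
  interpret finite_measure M by fact
  define S where "S = space M - {a}"
  have S[measurable]: "S \<in> sets M" using a by (auto simp: S_def)
  have [measurable]: "f \<in> borel_measurable M" using f_M by auto
  have "a \<in> space M" using a sets.sets_into_space by blast
  have split: "f x = indicator {a} x * f a + indicator S x * f x" if "x \<in> space M" for x
    using that by (auto simp: S_def indicator_def)
  have restrict: "density M (\<lambda>x. ennreal (indicator S x)) = density N (\<lambda>_. ennreal (1 - c))"
    unfolding S_def by (rule density_point_mass_mixture[OF assms(1-7)])
  have "integral\<^sup>L M f = integral\<^sup>L M (\<lambda>x. indicator {a} x * f a + indicator S x * f x)"
    by (rule Bochner_Integration.integral_cong[OF refl split])
  also have "\<dots> = integral\<^sup>L M (\<lambda>x. indicator {a} x * f a) + integral\<^sup>L M (\<lambda>x. indicator S x * f x)"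
    using integrable_mult_indicator[OF a, of "\<lambda>_. f a"] integrable_mult_indicator[OF S f_M]
    by (intro Bochner_Integration.integral_add) auto
  also have "integral\<^sup>L M (\<lambda>x. indicator {a} x * f a) = c * f a"
    using mix[OF a] Na \<open>a \<in> space M\<close> by simp
  also have "integral\<^sup>L M (\<lambda>x. indicator S x * f x) = integral\<^sup>L (density M (\<lambda>x. ennreal (indicator S x))) f"
    by (subst integral_density) auto
  also have "\<dots> = integral\<^sup>L N (\<lambda>x. (1 - c) *\<^sub>R f x)"
    unfolding restrict using c f_N by (intro integral_density) auto
  also have "\<dots> = (1 - c) * integral\<^sup>L N f" by simp
  finally show ?thesis .
qed

lemma Bernoulli_inequality_powr:
  fixes p x :: real
  assumes "1 \<le> p" "0 \<le> x" "x \<le> 1"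
  shows "1 + p * (x - 1) \<le> x powr p"
proof (cases "x = 0 \<or> x = 1")
  case True then show ?thesis using assms by auto
next
  case False
  then have x: "0 < x" "x < 1" using assms by auto
  have "\<exists>z>x. z < 1 \<and> 1 powr p - x powr p = (1 - x) * (p * z powr (p - 1))"
    by (rule MVT2) (use x in \<open>auto intro!: derivative_eq_intros\<close>)
  then obtain z where z: "x < z" "z < 1" "1 - x powr p = (1 - x) * (p * z powr (p - 1))" by auto
  have "z powr (p - 1) \<le> 1" using z x assms by (intro powr_le1) auto
  then have "(1 - x) * (p * z powr (p - 1)) \<le> (1 - x) * p"
    using x assms by (intro mult_left_mono) (auto simp: mult_le_cancel_left1)
  then show ?thesis using z by (simp add: algebra_simps)
qed

lemma psi_int_nonneg:
  assumes "1 \<le> q" "0 \<le> y" "y \<le> 1"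
  shows "0 \<le> psi_int q y"
  using Bernoulli_inequality_powr[of q "1 - y"] assms by (auto simp: psi_int_def)

lemma psi_int_le:
  assumes "2 \<le> q" "0 \<le> y" "y \<le> 1"
  shows "psi_int q y \<le> q * (q - 1)"
proof -
  consider (boundary) "y = 0 \<or> y = 1" | (interior) "0 < y" "y < 1" using assms by linarith
  then show ?thesis
  proof cases
    case boundary
    then show ?thesis using assms by (auto simp: psi_int_def)
  next
    case interior
    \<comment> \<open>Mean value theorem for (1 - y)^q, then Bernoulli for the derivative q (1 - z)^(q - 1).\<close>
    have "\<exists>z>0. z < y \<and> (1 - y) powr q - (1 - 0) powr q = (y - 0) * (- q * (1 - z) powr (q - 1))"
      by (rule MVT2) (use interior assms in \<open>auto intro!: derivative_eq_intros\<close>)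
    then obtain z where z: "0 < z" "z < y" "(1 - y) powr q - 1 = - q * y * (1 - z) powr (q - 1)"
      by auto
    have "1 - (q - 1) * y \<le> 1 + (q - 1) * ((1 - z) - 1)"
      using mult_left_mono[of z y "q - 1"] z assms by (simp add: algebra_simps)
    also have "\<dots> \<le> (1 - z) powr (q - 1)"
      using Bernoulli_inequality_powr[of "q - 1" "1 - z"] assms z by auto
    finally have "q * y * (1 - (q - 1) * y) \<le> q * y * (1 - z) powr (q - 1)"
      using interior assms by (intro mult_left_mono) auto
    then have "q * y - 1 + (1 - y) powr q \<le> q * (q - 1) * y\<^sup>2"
      using z(3) by (simp add: algebra_simps power2_eq_square)
    then show ?thesis using interior by (simp add: psi_int_def divide_le_eq)
  qed
qed

lemma Psi_nonneg: "1 \<le> q \<Longrightarrow> 0 \<le> Psi M q"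
  unfolding Psi_def set_lebesgue_integral_def
  by (rule Bochner_Integration.integral_nonneg) (auto simp: indicator_def intro: psi_int_nonneg)

lemma
  fixes M :: "real measure"
  assumes "finite_measure M" "sets M = sets borel" "2 \<le> q"
  shows integrable_psi_int: "integrable M (\<lambda>y. indicator {0..1} y * psi_int q y)"
    and Psi_le: "Psi M q \<le> q * (q - 1) * measure M (space M)"
proof -
  interpret finite_measure M by fact
  have [measurable]: "psi_int q \<in> borel_measurable borel"
    unfolding psi_int_def by measurable
  have bound: "norm (indicator {0..1} y * psi_int q y) \<le> q * (q - 1)" for y
    using psi_int_le[of q y] psi_int_nonneg[of q y] assms(3) by (auto simp: indicator_def)
  show int: "integrable M (\<lambda>y. indicator {0..1} y * psi_int q y)"
    using assms(2) bound by (intro integrable_const_bound[where B = "q * (q - 1)"]) auto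
  have "Psi M q \<le> integral\<^sup>L M (\<lambda>_. q * (q - 1))"
    unfolding Psi_def set_lebesgue_integral_def
    using int bound by (intro integral_mono) (auto simp: abs_le_iff)
  then show "Psi M q \<le> q * (q - 1) * measure M (space M)" by (simp add: ac_simps)
qed

lemma Psi_point_mass_mixture:
  fixes M N :: "real measure"
  assumes "finite_measure M" "finite_measure N" "sets M = sets borel" "sets N = sets borel"
    and "c \<le> 1" "measure N {0} = 0"
    and "\<And>B. B \<in> sets borel \<Longrightarrow> measure M B = c * indicator B 0 + (1 - c) * measure N B"
    and "2 \<le> q"
  shows "Psi M q = c * q * (q - 1) / 2 + (1 - c) * Psi N q"
  using integral_point_mass_mixture[of M N 0 c "\<lambda>y. indicator {0..1} y * psi_int q y"]
    integrable_psi_int[of M q] integrable_psi_int[of N q] assms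
  by (simp add: Psi_def set_lebesgue_integral_def psi_int_def)

section \<open>Second order expansion of the tail integral of 1 / P\<close>

lemma powr_add_half: "0 < x \<Longrightarrow> x powr (real n + 1/2) = x ^ n * sqrt x"
  by (simp add: powr_add powr_half_sqrt powr_realpow)

lemma tail_integral_powr:
  fixes a e :: real and g :: "real \<Rightarrow> real"
  assumes "e < -1" "0 < a" "\<And>x. 0 < x \<Longrightarrow> g x = x powr e"
  shows "set_integrable lborel {a..} g" "(LBINT x:{a..}. g x) = -(a powr (e + 1)) / (e + 1)"
proof -
  have eq: "x powr e = g x" if "x \<in> {a..}" for x
    using that assms(2,3) by simp
  have hi: "((\<lambda>x. x powr e) has_integral -(a powr (e + 1)) / (e + 1)) {a..}"
    by (rule has_integral_powr_to_inf[OF assms(1,2)])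
  have "(\<lambda>x. x powr e) absolutely_integrable_on {a..}"
    by (rule nonnegative_absolutely_integrable_1) (use hi in \<open>auto simp: integrable_on_def\<close>)
  then have si: "set_integrable lborel {a..} (\<lambda>x. x powr e)"
    unfolding set_integrable_def by (subst (asm) integrable_completion) auto
  then show "set_integrable lborel {a..} g"
    by (rule set_integrable_cong[THEN iffD1, OF refl refl eq, rotated])
  have "(LBINT x:{a..}. g x) = (LBINT x:{a..}. x powr e)"
    by (rule set_lebesgue_integral_cong) (use eq in auto)
  then show "(LBINT x:{a..}. g x) = -(a powr (e + 1)) / (e + 1)"
    using set_borel_integral_eq_integral(2)[OF si] hi integral_unique by metis
qed

lemma
  fixes v :: real
  assumes "0 < v"
  shows set_integrable_inverse_square: "set_integrable lborel {v..} (\<lambda>q. 1 / q\<^sup>2)"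
    and tail_integral_inverse_square: "(LBINT q:{v..}. 1 / q\<^sup>2) = 1 / v"
    and set_integrable_inverse_power_5_2: "set_integrable lborel {v..} (\<lambda>q. 1 / (q\<^sup>2 * sqrt q))"
    and tail_integral_inverse_power_5_2: "(LBINT q:{v..}. 1 / (q\<^sup>2 * sqrt q)) = 2 / (3 * v * sqrt v)"
    and set_integrable_inverse_cube: "set_integrable lborel {v..} (\<lambda>q. 1 / q ^ 3)"
    and tail_integral_inverse_cube: "(LBINT q:{v..}. 1 / q ^ 3) = 1 / (2 * v\<^sup>2)"
proof -
  have p2: "1 / x\<^sup>2 = x powr (-2)" and p3: "1 / x ^ 3 = x powr (-3)"
    and p52: "1 / (x\<^sup>2 * sqrt x) = x powr (-5/2)" if "0 < x" for x :: real
    using that powr_add_half[of x 2] by (simp_all add: powr_minus_divide powr_numeral)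
  show "set_integrable lborel {v..} (\<lambda>q. 1 / q\<^sup>2)" "(LBINT q:{v..}. 1 / q\<^sup>2) = 1 / v"
    using tail_integral_powr[of "-2" v, OF _ assms p2] assms by simp_all
  show "set_integrable lborel {v..} (\<lambda>q. 1 / q ^ 3)" "(LBINT q:{v..}. 1 / q ^ 3) = 1 / (2 * v\<^sup>2)"
    using tail_integral_powr[of "-3" v, OF _ assms p3] assms by (simp_all add: powr_minus_divide powr_numeral)
  show "set_integrable lborel {v..} (\<lambda>q. 1 / (q\<^sup>2 * sqrt q))"
    "(LBINT q:{v..}. 1 / (q\<^sup>2 * sqrt q)) = 2 / (3 * v * sqrt v)"
    using tail_integral_powr[of "-5/2" v, OF _ assms p52] assms powr_add_half[of v 1]
    by (simp_all add: powr_minus_divide)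
qed

lemma inverse_add_bounds:
  fixes X Y :: real
  assumes "0 < X" "X / 2 \<le> X + Y"
  shows "1 / X - Y / X\<^sup>2 \<le> 1 / (X + Y)" "1 / (X + Y) \<le> 1 / X - Y / X\<^sup>2 + 2 * Y\<^sup>2 / X ^ 3"
proof -
  have XY: "0 < X + Y" using assms by linarith
  have id: "1 / (X + Y) = 1 / X - Y / X\<^sup>2 + Y\<^sup>2 / (X\<^sup>2 * (X + Y))"
    using XY assms by (simp add: divide_simps) (simp add: algebra_simps power2_eq_square)
  have "0 \<le> Y\<^sup>2 / (X\<^sup>2 * (X + Y))" using XY by simp
  then show "1 / X - Y / X\<^sup>2 \<le> 1 / (X + Y)" using id by linarith
  have "Y\<^sup>2 / (X\<^sup>2 * (X + Y)) \<le> Y\<^sup>2 / (X\<^sup>2 * (X / 2))"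
    using assms XY by (intro divide_left_mono mult_left_mono) auto
  also have "\<dots> = 2 * Y\<^sup>2 / X ^ 3" using assms by (simp add: field_simps power2_eq_square power3_eq_cube)
  finally show "1 / (X + Y) \<le> 1 / X - Y / X\<^sup>2 + 2 * Y\<^sup>2 / X ^ 3" using id by linarith
qed

lemma
  fixes c \<beta> q :: real
  assumes c: "0 < c" and q: "0 < q" "16 * \<beta>\<^sup>2 / c\<^sup>2 \<le> q"
  shows quadratic_perturbation_pos: "0 < c * q\<^sup>2 / 2 + \<beta> * q * sqrt q"
    and inverse_quadratic_perturbation_ge:
      "2 / c * (1 / q\<^sup>2) - 4 * \<beta> / c\<^sup>2 * (1 / (q\<^sup>2 * sqrt q)) \<le> 1 / (c * q\<^sup>2 / 2 + \<beta> * q * sqrt q)"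
    and inverse_quadratic_perturbation_le:
      "1 / (c * q\<^sup>2 / 2 + \<beta> * q * sqrt q)
        \<le> 2 / c * (1 / q\<^sup>2) - 4 * \<beta> / c\<^sup>2 * (1 / (q\<^sup>2 * sqrt q)) + 16 * \<beta>\<^sup>2 / c ^ 3 * (1 / q ^ 3)"
proof -
  define X Y where "X = c * q\<^sup>2 / 2" and "Y = \<beta> * q * sqrt q"
  have X: "0 < X" using c q by (simp add: X_def)
  have "4 * \<bar>\<beta>\<bar> / c \<le> sqrt q"
    using q c by (intro real_le_rsqrt) (simp add: power_divide power_mult_distrib)
  then have "4 * \<bar>\<beta>\<bar> * (q * sqrt q) \<le> c * sqrt q * (q * sqrt q)"
    using c q by (intro mult_right_mono) (auto simp: divide_le_eq mult.commute)
  then have "\<bar>Y\<bar> \<le> X / 2"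
    using c q by (simp add: X_def Y_def abs_mult power2_eq_square algebra_simps)
  then have half: "X / 2 \<le> X + Y" by linarith
  then show "0 < c * q\<^sup>2 / 2 + \<beta> * q * sqrt q" using X by (simp add: X_def Y_def)
  have sq: "sqrt q * sqrt q = q" using q by simp
  have "1 / X = 2 / c * (1 / q\<^sup>2)" "Y / X\<^sup>2 = 4 * \<beta> / c\<^sup>2 * (1 / (q\<^sup>2 * sqrt q))"
    "2 * Y\<^sup>2 / X ^ 3 = 16 * \<beta>\<^sup>2 / c ^ 3 * (1 / q ^ 3)"
    using c q sq by (simp_all add: X_def Y_def field_simps power2_eq_square power3_eq_cube)
  then show "2 / c * (1 / q\<^sup>2) - 4 * \<beta> / c\<^sup>2 * (1 / (q\<^sup>2 * sqrt q)) \<le> 1 / (c * q\<^sup>2 / 2 + \<beta> * q * sqrt q)"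
    and "1 / (c * q\<^sup>2 / 2 + \<beta> * q * sqrt q)
        \<le> 2 / c * (1 / q\<^sup>2) - 4 * \<beta> / c\<^sup>2 * (1 / (q\<^sup>2 * sqrt q)) + 16 * \<beta>\<^sup>2 / c ^ 3 * (1 / q ^ 3)"
    using inverse_add_bounds[OF X half] by (simp_all add: X_def Y_def)
qed

lemma
  fixes c \<beta> v :: real
  assumes "0 < v"
  shows set_integrable_inverse_quadratic_expansion:
      "set_integrable lborel {v..} (\<lambda>q. 2 / c * (1 / q\<^sup>2) - 4 * \<beta> / c\<^sup>2 * (1 / (q\<^sup>2 * sqrt q)))"
    and tail_integral_inverse_quadratic_expansion:
      "(LBINT q:{v..}. 2 / c * (1 / q\<^sup>2) - 4 * \<beta> / c\<^sup>2 * (1 / (q\<^sup>2 * sqrt q)))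
        = 2 / (c * v) - 8 * \<beta> / (3 * c\<^sup>2 * v * sqrt v)"
    and set_integrable_inverse_quadratic_expansion':
      "set_integrable lborel {v..}
        (\<lambda>q. 2 / c * (1 / q\<^sup>2) - 4 * \<beta> / c\<^sup>2 * (1 / (q\<^sup>2 * sqrt q)) + 16 * \<beta>\<^sup>2 / c ^ 3 * (1 / q ^ 3))"
    and tail_integral_inverse_quadratic_expansion':
      "(LBINT q:{v..}. 2 / c * (1 / q\<^sup>2) - 4 * \<beta> / c\<^sup>2 * (1 / (q\<^sup>2 * sqrt q)) + 16 * \<beta>\<^sup>2 / c ^ 3 * (1 / q ^ 3))
        = 2 / (c * v) - 8 * \<beta> / (3 * c\<^sup>2 * v * sqrt v) + 8 * \<beta>\<^sup>2 / (c ^ 3 * v\<^sup>2)"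
proof -
  note i = set_integrable_mult_right[OF set_integrable_inverse_square[OF assms]]
    set_integrable_mult_right[OF set_integrable_inverse_power_5_2[OF assms]]
    set_integrable_mult_right[OF set_integrable_inverse_cube[OF assms]]
  note I = set_integral_mult_right tail_integral_inverse_square[OF assms]
    tail_integral_inverse_power_5_2[OF assms] tail_integral_inverse_cube[OF assms]
  show "set_integrable lborel {v..} (\<lambda>q. 2 / c * (1 / q\<^sup>2) - 4 * \<beta> / c\<^sup>2 * (1 / (q\<^sup>2 * sqrt q)))"
    "set_integrable lborel {v..}
      (\<lambda>q. 2 / c * (1 / q\<^sup>2) - 4 * \<beta> / c\<^sup>2 * (1 / (q\<^sup>2 * sqrt q)) + 16 * \<beta>\<^sup>2 / c ^ 3 * (1 / q ^ 3))"
    by (intro set_integral_add set_integral_diff i)+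
  show "(LBINT q:{v..}. 2 / c * (1 / q\<^sup>2) - 4 * \<beta> / c\<^sup>2 * (1 / (q\<^sup>2 * sqrt q)))
      = 2 / (c * v) - 8 * \<beta> / (3 * c\<^sup>2 * v * sqrt v)"
    "(LBINT q:{v..}. 2 / c * (1 / q\<^sup>2) - 4 * \<beta> / c\<^sup>2 * (1 / (q\<^sup>2 * sqrt q)) + 16 * \<beta>\<^sup>2 / c ^ 3 * (1 / q ^ 3))
      = 2 / (c * v) - 8 * \<beta> / (3 * c\<^sup>2 * v * sqrt v) + 8 * \<beta>\<^sup>2 / (c ^ 3 * v\<^sup>2)"
    by (simp_all only: set_integral_add set_integral_diff set_integral_diff(1)[OF i(1,2)] i I)
      (simp_all add: field_simps)
qed

lemma tail_integral_inverse_le: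
  fixes P :: "real \<Rightarrow> real" and c \<beta> v :: real
  assumes c: "0 < c" and v: "0 < v" "16 * \<beta>\<^sup>2 / c\<^sup>2 \<le> v"
    and int: "set_integrable lborel {v..} (\<lambda>q. 1 / P q)"
    and P: "\<And>q. v \<le> q \<Longrightarrow> c * q\<^sup>2 / 2 + \<beta> * q * sqrt q \<le> P q"
  shows "(LBINT q:{v..}. 1 / P q) \<le> 2 / (c * v) - 8 * \<beta> / (3 * c\<^sup>2 * v * sqrt v) + 8 * \<beta>\<^sup>2 / (c ^ 3 * v\<^sup>2)"
proof -
  have "(LBINT q:{v..}. 1 / P q)
      \<le> (LBINT q:{v..}. 2 / c * (1 / q\<^sup>2) - 4 * \<beta> / c\<^sup>2 * (1 / (q\<^sup>2 * sqrt q)) + 16 * \<beta>\<^sup>2 / c ^ 3 * (1 / q ^ 3))"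
  proof (rule set_integral_mono[OF int set_integrable_inverse_quadratic_expansion'[OF v(1)]])
    fix q assume "q \<in> {v..}"
    then have q: "0 < q" "16 * \<beta>\<^sup>2 / c\<^sup>2 \<le> q" "v \<le> q" using v by auto
    have "1 / P q \<le> 1 / (c * q\<^sup>2 / 2 + \<beta> * q * sqrt q)"
      using P[OF q(3)] quadratic_perturbation_pos[OF c q(1,2)]
      by (intro divide_left_mono) (auto intro!: mult_pos_pos)
    also have "\<dots> \<le> 2 / c * (1 / q\<^sup>2) - 4 * \<beta> / c\<^sup>2 * (1 / (q\<^sup>2 * sqrt q)) + 16 * \<beta>\<^sup>2 / c ^ 3 * (1 / q ^ 3)"
      by (rule inverse_quadratic_perturbation_le[OF c q(1,2)])
    finally show "1 / P q \<le> \<dots>" .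
  qed
  then show ?thesis by (simp only: tail_integral_inverse_quadratic_expansion'[OF v(1)])
qed

lemma tail_integral_inverse_ge:
  fixes P :: "real \<Rightarrow> real" and c \<beta> v :: real
  assumes c: "0 < c" and v: "0 < v" "16 * \<beta>\<^sup>2 / c\<^sup>2 \<le> v"
    and int: "set_integrable lborel {v..} (\<lambda>q. 1 / P q)"
    and P: "\<And>q. v \<le> q \<Longrightarrow> 0 < P q \<and> P q \<le> c * q\<^sup>2 / 2 + \<beta> * q * sqrt q"
  shows "2 / (c * v) - 8 * \<beta> / (3 * c\<^sup>2 * v * sqrt v) \<le> (LBINT q:{v..}. 1 / P q)"
proof -
  have "(LBINT q:{v..}. 2 / c * (1 / q\<^sup>2) - 4 * \<beta> / c\<^sup>2 * (1 / (q\<^sup>2 * sqrt q))) \<le> (LBINT q:{v..}. 1 / P q)"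
  proof (rule set_integral_mono[OF set_integrable_inverse_quadratic_expansion[OF v(1)] int])
    fix q assume "q \<in> {v..}"
    then have q: "0 < q" "16 * \<beta>\<^sup>2 / c\<^sup>2 \<le> q" "v \<le> q" using v by auto
    have "2 / c * (1 / q\<^sup>2) - 4 * \<beta> / c\<^sup>2 * (1 / (q\<^sup>2 * sqrt q)) \<le> 1 / (c * q\<^sup>2 / 2 + \<beta> * q * sqrt q)"
      by (rule inverse_quadratic_perturbation_ge[OF c q(1,2)])
    also have "\<dots> \<le> 1 / P q"
      using P[OF q(3)] by (intro divide_left_mono) auto
    finally show "2 / c * (1 / q\<^sup>2) - 4 * \<beta> / c\<^sup>2 * (1 / (q\<^sup>2 * sqrt q)) \<le> 1 / P q" .
  qed
  then show ?thesis by (simp only: tail_integral_inverse_quadratic_expansion[OF v(1)])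
qed

lemma tendsto_const_div_sqrt_at_top: "((\<lambda>v. K / sqrt v) \<longlongrightarrow> 0) at_top"
  by (rule tendsto_divide_0[OF tendsto_const filterlim_at_top_imp_at_infinity[OF sqrt_at_top]])

definition tail_correction :: "real \<Rightarrow> (real \<Rightarrow> real) \<Rightarrow> real \<Rightarrow> real" where
  "tail_correction c P v = c / 2 * v * sqrt v * ((LBINT q:{v..}. 1 / P q) - 2 / (c * v))"

lemma eventually_tail_correction_le:
  fixes P R :: "real \<Rightarrow> real"
  assumes c: "0 < c" and P: "eventually (\<lambda>q. P q = c * q\<^sup>2 / 2 + R q * q * sqrt q) at_top"
    and R: "eventually (\<lambda>q. \<beta> \<le> R q) at_top"
    and int: "eventually (\<lambda>v. set_integrable lborel {v..} (\<lambda>q. 1 / P q)) at_top"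
  shows "eventually (\<lambda>v. tail_correction c P v \<le> - (4 * \<beta> / (3 * c)) + 4 * \<beta>\<^sup>2 / c\<^sup>2 / sqrt v) at_top"
proof -
  have "eventually (\<lambda>q. c * q\<^sup>2 / 2 + \<beta> * q * sqrt q \<le> P q) at_top"
    using P R eventually_ge_at_top[of 0] by eventually_elim (auto simp: mult.assoc intro!: mult_right_mono)
  then obtain Q where Q: "\<And>q. Q \<le> q \<Longrightarrow> c * q\<^sup>2 / 2 + \<beta> * q * sqrt q \<le> P q"
    by (auto simp: eventually_at_top_linorder)
  show ?thesis
    using int eventually_ge_at_top[of "max (max Q 1) (16 * \<beta>\<^sup>2 / c\<^sup>2)"]
  proof eventually_elim
    case (elim v)
    then have v: "0 < v" "16 * \<beta>\<^sup>2 / c\<^sup>2 \<le> v" by auto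
    have "(LBINT q:{v..}. 1 / P q) - 2 / (c * v) \<le> - 8 * \<beta> / (3 * c\<^sup>2 * v * sqrt v) + 8 * \<beta>\<^sup>2 / (c ^ 3 * v\<^sup>2)"
      using tail_integral_inverse_le[OF c v elim(1)] Q elim(2) by fastforce
    then have "tail_correction c P v
        \<le> c / 2 * v * sqrt v * (- 8 * \<beta> / (3 * c\<^sup>2 * v * sqrt v) + 8 * \<beta>\<^sup>2 / (c ^ 3 * v\<^sup>2))"
      unfolding tail_correction_def using c v by (intro mult_left_mono) auto
    also have "\<dots> = - (4 * \<beta> / (3 * c)) + 4 * \<beta>\<^sup>2 / c\<^sup>2 / sqrt v"
    proof -
      have "sqrt v * sqrt v = v" using v by simp
      then show ?thesis using c v by (simp add: field_simps power2_eq_square power3_eq_cube)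
    qed
    finally show ?case .
  qed
qed

lemma eventually_tail_correction_ge:
  fixes P R :: "real \<Rightarrow> real"
  assumes c: "0 < c" and P: "eventually (\<lambda>q. P q = c * q\<^sup>2 / 2 + R q * q * sqrt q) at_top"
    and R: "eventually (\<lambda>q. \<gamma> \<le> R q \<and> R q \<le> \<beta>) at_top"
    and int: "eventually (\<lambda>v. set_integrable lborel {v..} (\<lambda>q. 1 / P q)) at_top"
  shows "eventually (\<lambda>v. - (4 * \<beta> / (3 * c)) \<le> tail_correction c P v) at_top"
proof -
  \<comment> \<open>The lower bound \<gamma> on R only serves to keep P positive.\<close>
  have "eventually (\<lambda>q. 0 < P q \<and> P q \<le> c * q\<^sup>2 / 2 + \<beta> * q * sqrt q) at_top"
    using P R eventually_ge_at_top[of "max 1 (16 * \<gamma>\<^sup>2 / c\<^sup>2)"]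
  proof eventually_elim
    case (elim q)
    then have q: "0 < q" "16 * \<gamma>\<^sup>2 / c\<^sup>2 \<le> q" by auto
    have "0 < c * q\<^sup>2 / 2 + \<gamma> * q * sqrt q" by (rule quadratic_perturbation_pos[OF c q])
    moreover have "\<gamma> * (q * sqrt q) \<le> R q * (q * sqrt q)" "R q * (q * sqrt q) \<le> \<beta> * (q * sqrt q)"
      using elim q by (auto intro!: mult_right_mono)
    ultimately show ?case using elim(1) by (simp add: mult.assoc)
  qed
  then obtain Q where Q: "\<And>q. Q \<le> q \<Longrightarrow> 0 < P q \<and> P q \<le> c * q\<^sup>2 / 2 + \<beta> * q * sqrt q"
    by (auto simp: eventually_at_top_linorder)
  show ?thesis
    using int eventually_ge_at_top[of "max (max Q 1) (16 * \<beta>\<^sup>2 / c\<^sup>2)"]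
  proof eventually_elim
    case (elim v)
    then have v: "0 < v" "16 * \<beta>\<^sup>2 / c\<^sup>2 \<le> v" by auto
    have "- 8 * \<beta> / (3 * c\<^sup>2 * v * sqrt v) \<le> (LBINT q:{v..}. 1 / P q) - 2 / (c * v)"
      using tail_integral_inverse_ge[OF c v elim(1)] Q elim(2) by fastforce
    then have "c / 2 * v * sqrt v * (- 8 * \<beta> / (3 * c\<^sup>2 * v * sqrt v)) \<le> tail_correction c P v"
      unfolding tail_correction_def using c v by (intro mult_left_mono) auto
    moreover have "c / 2 * v * sqrt v * (- 8 * \<beta> / (3 * c\<^sup>2 * v * sqrt v)) = - (4 * \<beta> / (3 * c))"
      using c v by (simp add: field_simps power2_eq_square)
    ultimately show ?case by simp
  qed
qed

lemma tendsto_tail_correction: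
  fixes P R :: "real \<Rightarrow> real"
  assumes c: "0 < c" and P: "eventually (\<lambda>q. P q = c * q\<^sup>2 / 2 + R q * q * sqrt q) at_top"
    and R: "(R \<longlongrightarrow> \<alpha>) at_top"
    and int: "eventually (\<lambda>v. set_integrable lborel {v..} (\<lambda>q. 1 / P q)) at_top"
  shows "(tail_correction c P \<longlongrightarrow> - (4 * \<alpha> / (3 * c))) at_top"
proof (rule order_tendstoI)
  fix y assume y: "y < - (4 * \<alpha> / (3 * c))"
  define \<beta> where "\<beta> = \<alpha> / 2 - 3 * c * y / 8"
  have y_less: "y < - (4 * \<beta> / (3 * c))"
    using y c unfolding \<beta>_def by (simp add: field_simps)
  have "eventually (\<lambda>q. \<alpha> - 1 \<le> R q \<and> R q \<le> \<beta>) at_top"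
    using order_tendstoD[OF R, of "\<alpha> - 1"] order_tendstoD[OF R, of \<beta>] y c
    by (auto simp: \<beta>_def field_simps elim: eventually_elim2)
  from eventually_tail_correction_ge[OF c P this int]
  show "eventually (\<lambda>v. y < tail_correction c P v) at_top"
    by eventually_elim (rule less_le_trans[OF y_less])
next
  fix y assume y: "- (4 * \<alpha> / (3 * c)) < y"
  define \<beta> where "\<beta> = \<alpha> / 2 - 3 * c * y / 8"
  define \<delta> where "\<delta> = (y + 4 * \<alpha> / (3 * c)) / 2"
  have mid: "- (4 * \<beta> / (3 * c)) + \<delta> = y"
    using c unfolding \<beta>_def \<delta>_def by (simp add: field_simps)
  have \<delta>_pos: "0 < \<delta>" using y by (simp add: \<delta>_def)
  have "eventually (\<lambda>q. \<beta> \<le> R q) at_top"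
    using order_tendstoD(1)[OF R, of \<beta>] y c by (auto simp: \<beta>_def field_simps elim: eventually_mono)
  from eventually_tail_correction_le[OF c P this int]
    and order_tendstoD(2)[OF tendsto_const_div_sqrt_at_top[of "4 * \<beta>\<^sup>2 / c\<^sup>2"] \<delta>_pos]
  show "eventually (\<lambda>v. tail_correction c P v < y) at_top"
  proof eventually_elim
    case (elim v)
    note elim(1)
    also have "- (4 * \<beta> / (3 * c)) + 4 * \<beta>\<^sup>2 / c\<^sup>2 / sqrt v < - (4 * \<beta> / (3 * c)) + \<delta>"
      using elim(2) by simp
    finally show ?case unfolding mid .
  qed
qed

lemma tail_correction_tendsto_at_bot:
  fixes P R :: "real \<Rightarrow> real"
  assumes c: "0 < c" and P: "eventually (\<lambda>q. P q = c * q\<^sup>2 / 2 + R q * q * sqrt q) at_top"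
    and R: "filterlim R at_top at_top"
    and int: "eventually (\<lambda>v. set_integrable lborel {v..} (\<lambda>q. 1 / P q)) at_top"
  shows "filterlim (tail_correction c P) at_bot at_top"
  unfolding filterlim_at_bot
proof
  fix K :: real
  define \<beta> where "\<beta> = max 0 (3 * c * (1 - K) / 4)"
  have \<beta>_large: "- (4 * \<beta> / (3 * c)) \<le> K - 1"
    using c by (auto simp: \<beta>_def field_simps max_def)
  have "eventually (\<lambda>q. \<beta> \<le> R q) at_top"
    using R by (simp add: filterlim_at_top)
  from eventually_tail_correction_le[OF c P this int]
    and order_tendstoD(2)[OF tendsto_const_div_sqrt_at_top[of "4 * \<beta>\<^sup>2 / c\<^sup>2"] zero_less_one]
  show "eventually (\<lambda>v. tail_correction c P v \<le> K) at_top"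
  proof eventually_elim
    case (elim v)
    note elim(1)
    also have "- (4 * \<beta> / (3 * c)) + 4 * \<beta>\<^sup>2 / c\<^sup>2 / sqrt v \<le> K - 1 + 1"
      using elim(2) \<beta>_large by (intro add_mono) auto
    finally show ?case by simp
  qed
qed

section \<open>Inverting the tail integral\<close>

lemma set_integrable_if_set_integral_nonzero:
  fixes f :: "'a \<Rightarrow> real"
  assumes "(LINT x:A|M. f x) \<noteq> 0"
  shows "set_integrable M A f"
  using assms not_integrable_integral_eq unfolding set_integrable_def set_lebesgue_integral_def by blast

lemma eventually_tail_integrable:
  fixes f :: "real \<Rightarrow> real"
  assumes "(LBINT q:{v..}. f q) \<noteq> 0"
  shows "eventually (\<lambda>u. set_integrable lborel {u..} f) at_top"
  using eventually_ge_at_top[of v]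
  by eventually_elim (auto intro: set_integrable_subset[OF set_integrable_if_set_integral_nonzero[OF assms]])

lemma inverse_of_tail_integral_tendsto_at_top:
  fixes P v :: "real \<Rightarrow> real"
  assumes P_nonneg: "\<And>q. 1 \<le> q \<Longrightarrow> 0 \<le> P q"
    and P_le: "\<And>q. 2 \<le> q \<Longrightarrow> 0 < P q \<and> P q \<le> q\<^sup>2"
    and v: "\<And>t. 0 < t \<Longrightarrow> 1 < v t \<and> t = (LBINT q:{v t..}. 1 / P q)"
  shows "filterlim v at_top (at_right 0)"
  unfolding filterlim_at_top
proof
  fix Z :: real
  define M where "M = max Z 2"
  have "eventually (\<lambda>t. t \<in> {0<..<1 / M}) (at_right 0)"
    by (rule eventually_at_right_real) (simp add: M_def)
  then show "eventually (\<lambda>t. Z \<le> v t) (at_right 0)"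
  proof eventually_elim
    case (elim t)
    then have t: "0 < t" "t < 1 / M" by auto
    have int: "set_integrable lborel {v t..} (\<lambda>q. 1 / P q)"
      using v[OF t(1)] t(1) by (intro set_integrable_if_set_integral_nonzero) simp
    show "Z \<le> v t"
    proof (rule ccontr)
      assume "\<not> Z \<le> v t"
      then have "{M..} \<subseteq> {v t..}" by (auto simp: M_def)
      then have int_M: "set_integrable lborel {M..} (\<lambda>q. 1 / P q)"
        by (intro set_integrable_subset[OF int]) auto
      have "1 / M = (LBINT q:{M..}. 1 / q\<^sup>2)"
        by (simp add: tail_integral_inverse_square M_def)
      also have "\<dots> \<le> (LBINT q:{M..}. 1 / P q)"
      proof (rule set_integral_mono)
        show "set_integrable lborel {M..} (\<lambda>q. 1 / q\<^sup>2)"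
          by (simp add: set_integrable_inverse_square M_def)
        show "set_integrable lborel {M..} (\<lambda>q. 1 / P q)" by (fact int_M)
        show "1 / q\<^sup>2 \<le> 1 / P q" if "q \<in> {M..}" for q
          using P_le[of q] that by (intro divide_left_mono) (auto simp: M_def)
      qed
      also have "\<dots> \<le> (LBINT q:{v t..}. 1 / P q)"
        using \<open>{M..} \<subseteq> {v t..}\<close> v[OF t(1)] P_nonneg int int_M
        unfolding set_lebesgue_integral_def set_integrable_def
        by (intro integral_mono) (auto simp: indicator_def)
      also have "\<dots> = t" using v[OF t(1)] by simp
      finally show False using t by simp
    qed
  qed
qed

lemma eventually_rescaled_inverse_tail_eq:
  fixes P v :: "real \<Rightarrow> real"
  assumes c: "0 < c" and v: "\<And>t. 0 < t \<Longrightarrow> 0 < v t \<and> t = (LBINT q:{v t..}. 1 / P q)"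
  shows "eventually (\<lambda>t. (c * t / 2 * v t - 1) / sqrt t = tail_correction c P (v t) / sqrt (v t * t)
    \<and> v t * t = 2 / c * (1 + tail_correction c P (v t) / sqrt (v t))) (at_right 0)"
  using eventually_at_right_less[of "0::real"]
proof eventually_elim
  case (elim t)
  define S where "S = tail_correction c P (v t)"
  from v[OF elim] have v_pos: "0 < v t" and "(LBINT q:{v t..}. 1 / P q) = t" by simp_all
  then have S: "S = sqrt (v t) * (c * t / 2 * v t - 1)"
    unfolding S_def tail_correction_def using c by (simp add: field_simps)
  have "(c * t / 2 * v t - 1) / sqrt t = S / sqrt (v t * t)"
    using elim v_pos by (simp add: S real_sqrt_mult)
  moreover have "v t * t = 2 / c * (1 + S / sqrt (v t))"
    using c v_pos by (simp add: S field_simps)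
  ultimately show ?case by (simp add: S_def)
qed

lemma tendsto_rescaled_inverse_tail:
  fixes P v :: "real \<Rightarrow> real"
  assumes c: "0 < c" and v_lim: "filterlim v at_top (at_right 0)"
    and v: "\<And>t. 0 < t \<Longrightarrow> 0 < v t \<and> t = (LBINT q:{v t..}. 1 / P q)"
    and lim: "(tail_correction c P \<longlongrightarrow> \<sigma>) at_top"
  shows "((\<lambda>t. (c * t / 2 * v t - 1) / sqrt t) \<longlongrightarrow> \<sigma> * sqrt (c / 2)) (at_right 0)"
proof -
  define S where "S t = tail_correction c P (v t)" for t
  have S_lim: "(S \<longlongrightarrow> \<sigma>) (at_right 0)"
    unfolding S_def using filterlim_compose[OF lim v_lim] by (simp add: o_def)
  have inv_sqrt: "((\<lambda>t. 1 / sqrt (v t)) \<longlongrightarrow> 0) (at_right 0)"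
    using filterlim_compose[OF tendsto_const_div_sqrt_at_top[of 1] v_lim] by simp
  from eventually_rescaled_inverse_tail_eq[OF c v]
  have ev_vt: "eventually (\<lambda>t. 2 / c * (1 + S t * (1 / sqrt (v t))) = v t * t) (at_right 0)"
    and ev_quot: "eventually (\<lambda>t. S t / sqrt (v t * t) = (c * t / 2 * v t - 1) / sqrt t) (at_right 0)"
    by (auto simp: S_def elim: eventually_mono)
  have "((\<lambda>t. 2 / c * (1 + S t * (1 / sqrt (v t)))) \<longlongrightarrow> 2 / c * (1 + \<sigma> * 0)) (at_right 0)"
    by (intro tendsto_intros S_lim inv_sqrt)
  then have "((\<lambda>t. v t * t) \<longlongrightarrow> 2 / c) (at_right 0)"
    using Lim_transform_eventually[OF _ ev_vt] by simp
  then have "((\<lambda>t. S t / sqrt (v t * t)) \<longlongrightarrow> \<sigma> / sqrt (2 / c)) (at_right 0)"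
    using c by (intro tendsto_intros S_lim) auto
  moreover have "\<sigma> / sqrt (2 / c) = \<sigma> * sqrt (c / 2)"
    by (simp add: real_sqrt_divide field_simps)
  ultimately show ?thesis
    using Lim_transform_eventually[OF _ ev_quot] by simp
qed

lemma rescaled_inverse_tail_tendsto_at_bot:
  fixes P v :: "real \<Rightarrow> real"
  assumes c: "0 < c" and v_lim: "filterlim v at_top (at_right 0)"
    and v: "\<And>t. 0 < t \<Longrightarrow> 0 < v t \<and> t = (LBINT q:{v t..}. 1 / P q)"
    and lim: "filterlim (tail_correction c P) at_bot at_top"
  shows "filterlim (\<lambda>t. (c * t / 2 * v t - 1) / sqrt t) at_bot (at_right 0)"
  unfolding filterlim_at_bot
proof
  fix Z :: real
  define W where "W = - \<bar>Z\<bar> * sqrt (2 / c)"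
  have "eventually (\<lambda>t. tail_correction c P (v t) \<le> W) (at_right 0)"
    using filterlim_compose[OF lim v_lim] by (simp add: filterlim_at_bot)
  then have "eventually (\<lambda>t. tail_correction c P (v t) \<le> W
    \<and> ((c * t / 2 * v t - 1) / sqrt t = tail_correction c P (v t) / sqrt (v t * t)
    \<and> v t * t = 2 / c * (1 + tail_correction c P (v t) / sqrt (v t))) \<and> 0 < t) (at_right 0)"
    by (intro eventually_conj eventually_rescaled_inverse_tail_eq[OF c v] eventually_at_right_less)
  then show "eventually (\<lambda>t. (c * t / 2 * v t - 1) / sqrt t \<le> Z) (at_right 0)"
  proof eventually_elim
    case (elim t)
    define S where "S = tail_correction c P (v t)"
    have S_le: "S \<le> W" and quot: "(c * t / 2 * v t - 1) / sqrt t = S / sqrt (v t * t)"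
      and vt: "v t * t = 2 / c * (1 + S / sqrt (v t))" and t: "0 < t"
      using elim unfolding S_def by blast+
    have v_pos: "0 < v t" using v t by blast
    have "W \<le> 0" using c by (simp add: W_def)
    with S_le have S_neg: "S \<le> 0" by simp
    then have "S / sqrt (v t) \<le> 0" using v_pos by (simp add: divide_nonpos_pos)
    then have "v t * t \<le> 2 / c * 1" unfolding vt using c by (intro mult_left_mono) auto
    then have "sqrt (v t * t) \<le> sqrt (2 / c)" by simp
    then have "S / sqrt (v t * t) \<le> S / sqrt (2 / c)"
      using S_neg v_pos t c by (intro divide_left_mono_neg) auto
    also have "\<dots> \<le> W / sqrt (2 / c)"
      using S_le c by (simp add: divide_right_mono)
    also have "\<dots> \<le> Z" using c by (simp add: W_def)
    finally show ?case using quot by simp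
  qed
qed

lemma point_mass_mixture_expansion:
  fixes c q X :: real
  assumes "0 < q"
  shows "c * q * (q - 1) / 2 + (1 - c) * X
    = c * q\<^sup>2 / 2 + ((1 - c) * (X / q powr (3/2)) - c / 2 / sqrt q) * q * sqrt q"
proof -
  obtain s where s: "0 < s" "q = s\<^sup>2" "sqrt q = s"
    using assms by (intro that[of "sqrt q"]) auto
  have "q powr (3/2) = q * sqrt q" using powr_add_half[of q 1] assms by simp
  then show ?thesis using s by (simp add: field_simps power2_eq_square)
qed

lemma rescaled_limit_constant:
  fixes c a :: real
  assumes "0 < c"
  shows "- (4 * ((1 - c) * a) / (3 * c)) * sqrt (c / 2) = - (2 * sqrt 2 / (3 * sqrt c)) * (1 - c) * a"
proof -
  obtain r where "0 < r" "c = r\<^sup>2" "sqrt c = r"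
    using assms by (intro that[of "sqrt c"]) auto
  then show ?thesis by (simp add: real_sqrt_divide field_simps power2_eq_square)
qed

lemma mixture_remainder_tendsto_at_top:
  fixes X :: "real \<Rightarrow> real"
  assumes "c < 1" and "((\<lambda>q. ereal (X q)) \<longlongrightarrow> \<infinity>) at_top"
  shows "filterlim (\<lambda>q. (1 - c) * X q - c / 2 / sqrt q) at_top at_top"
proof -
  have "filterlim (\<lambda>q. - (c / 2 / sqrt q) + (1 - c) * X q) at_top at_top"
    using assms
    by (intro filterlim_tendsto_add_at_top[OF tendsto_minus[OF tendsto_const_div_sqrt_at_top]]
        filterlim_tendsto_pos_mult_at_top[OF tendsto_const]) (auto simp: tendsto_PInfty_eq_at_top)
  moreover have "(\<lambda>q. - (c / 2 / sqrt q) + (1 - c) * X q) = (\<lambda>q. (1 - c) * X q - c / 2 / sqrt q)"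
    by (simp add: fun_eq_iff)
  ultimately show ?thesis by (simp only:)
qed

lemma rescaled_inverse_tail_ereal_limit:
  fixes P \<Psi>\<^sub>1 v :: "real \<Rightarrow> real" and A :: ereal
  assumes c: "0 < c" "c \<le> 1"
    and P: "eventually (\<lambda>q. P q = c * q * (q - 1) / 2 + (1 - c) * \<Psi>\<^sub>1 q) at_top"
    and \<Psi>\<^sub>1: "((\<lambda>q. ereal (\<Psi>\<^sub>1 q / q powr (3/2))) \<longlongrightarrow> A) at_top" and "0 \<le> A"
    and int: "eventually (\<lambda>u. set_integrable lborel {u..} (\<lambda>q. 1 / P q)) at_top"
    and v_lim: "filterlim v at_top (at_right 0)"
    and v: "\<And>t. 0 < t \<Longrightarrow> 0 < v t \<and> t = (LBINT q:{v t..}. 1 / P q)"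
  shows "((\<lambda>t. ereal ((c * t / 2 * v t - 1) / sqrt t)) \<longlongrightarrow>
            ereal (- (2 * sqrt 2 / (3 * sqrt c)) * (1 - c)) * A) (at_right 0)"
proof -
  define R where "R q = (1 - c) * (\<Psi>\<^sub>1 q / q powr (3/2)) - c / 2 / sqrt q" for q
  have P_R: "eventually (\<lambda>q. P q = c * q\<^sup>2 / 2 + R q * q * sqrt q) at_top"
    using P eventually_gt_at_top[of 0]
    by eventually_elim (simp add: R_def point_mass_mixture_expansion)
  consider (finite) a where "A = ereal a" | (infinite) "A = \<infinity>" "c < 1" | (degenerate) "A = \<infinity>" "c = 1"
    using \<open>0 \<le> A\<close> c by (cases A) force+
  then show ?thesis
  proof cases
    case finite
    have "(R \<longlongrightarrow> (1 - c) * a - 0) at_top"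
      unfolding R_def using \<Psi>\<^sub>1 finite by (intro tendsto_intros tendsto_const_div_sqrt_at_top) simp
    then have "(R \<longlongrightarrow> (1 - c) * a) at_top" by simp
    from tendsto_rescaled_inverse_tail[OF c(1) v_lim v tendsto_tail_correction[OF c(1) P_R this int],
      unfolded rescaled_limit_constant[OF c(1)]]
    show ?thesis by (simp add: finite)
  next
    case infinite
    have "filterlim R at_top at_top"
      unfolding R_def by (rule mixture_remainder_tendsto_at_top[OF infinite(2)]) (use \<Psi>\<^sub>1 infinite(1) in simp)
    from rescaled_inverse_tail_tendsto_at_bot[OF c(1) v_lim v tail_correction_tendsto_at_bot[OF c(1) P_R this int]]
    have "((\<lambda>t. ereal ((c * t / 2 * v t - 1) / sqrt t)) \<longlongrightarrow> -\<infinity>) (at_right 0)"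
      by (rule ereal_tendsto_simps2(3)[unfolded comp_def, THEN iffD2])
    moreover have "ereal x * \<infinity> = -\<infinity>" if "x < 0" for x :: real
      using that by simp
    then have "ereal (- (2 * sqrt 2 / (3 * sqrt c)) * (1 - c)) * \<infinity> = -\<infinity>"
      using infinite c by (simp add: field_simps)
    ultimately show ?thesis by (simp only: infinite)
  next
    case degenerate
    \<comment> \<open>Here Psi_1 does not enter P, and the claimed limit is ereal 0 * \<infinity> = 0.\<close>
    have "(R \<longlongrightarrow> 0) at_top"
      unfolding R_def using degenerate tendsto_const_div_sqrt_at_top[of "-1/2"] by simp
    from tendsto_rescaled_inverse_tail[OF c(1) v_lim v tendsto_tail_correction[OF c(1) P_R this int]]
    show ?thesis by (simp add: degenerate zero_ereal_def)
  qed
qed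

theorem lemma3p8:
  fixes \<Lambda> \<Lambda>1 :: "real measure" and c :: real and A :: ereal and v :: "real \<Rightarrow> real"
  assumes "prob_space \<Lambda>" and "sets \<Lambda> = sets borel" and "measure \<Lambda> {0..1} = 1"
    and "c = measure \<Lambda> {0}" and "c > 0"
    and "c < 1 \<Longrightarrow> prob_space \<Lambda>1 \<and> sets \<Lambda>1 = sets borel \<and> measure \<Lambda>1 {0} = 0"
    and "c = 1 \<Longrightarrow> \<Lambda>1 = null_measure borel"
    and "\<forall>B \<in> sets borel. measure \<Lambda> B = c * indicator B 0 + (1 - c) * measure \<Lambda>1 B"
    and "A \<ge> 0"
    and "((\<lambda>q. ereal (Psi \<Lambda>1 q / q powr (3/2))) \<longlongrightarrow> A) at_top"
    and "\<forall>t>0. v t > 1 \<and> t = (LBINT q:{v t..}. 1 / Psi \<Lambda> q)"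
  shows "((\<lambda>t. ereal ((c * t / 2 * v t - 1) / sqrt t)) \<longlongrightarrow>
            ereal (- (2 * sqrt 2 / (3 * sqrt c)) * (1 - c)) * A) (at_right 0)"
proof -
  interpret \<Lambda>: prob_space \<Lambda> by fact
  have c_le_1: "c \<le> 1" using assms(4) \<Lambda>.prob_le_1 by simp
  have \<Lambda>1: "finite_measure \<Lambda>1" "sets \<Lambda>1 = sets borel" "measure \<Lambda>1 {0} = 0"
    using assms(6,7) c_le_1 by (cases "c < 1"; force intro: prob_space.finite_measure finite_measureI)+
  have mixture: "Psi \<Lambda> q = c * q * (q - 1) / 2 + (1 - c) * Psi \<Lambda>1 q" if "2 \<le> q" for q
    using Psi_point_mass_mixture[OF \<Lambda>.finite_measure \<Lambda>1(1) assms(2) \<Lambda>1(2) c_le_1 \<Lambda>1(3)] assms(8) that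
    by blast
  have Psi_bounds: "0 < Psi \<Lambda> q \<and> Psi \<Lambda> q \<le> q\<^sup>2" if "2 \<le> q" for q
  proof
    show "0 < Psi \<Lambda> q"
      using mixture[OF that] Psi_nonneg[of q \<Lambda>1] assms(5) c_le_1 that
      by (simp add: add_pos_nonneg)
    show "Psi \<Lambda> q \<le> q\<^sup>2"
      using Psi_le[OF \<Lambda>.finite_measure assms(2) that] that
      by (simp add: \<Lambda>.prob_space power2_eq_square algebra_simps)
  qed
  have v: "1 < v t \<and> t = (LBINT q:{v t..}. 1 / Psi \<Lambda> q)" if "0 < t" for t
    using assms(11) that by blast
  have v_lim: "filterlim v at_top (at_right 0)"
    by (rule inverse_of_tail_integral_tendsto_at_top[OF Psi_nonneg Psi_bounds v])
  have int: "eventually (\<lambda>u. set_integrable lborel {u..} (\<lambda>q. 1 / Psi \<Lambda> q)) at_top"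
    by (rule eventually_tail_integrable[of "v 1"]) (use v[of 1] in simp)
  have "eventually (\<lambda>q. Psi \<Lambda> q = c * q * (q - 1) / 2 + (1 - c) * Psi \<Lambda>1 q) at_top"
    using eventually_ge_at_top[of 2] by eventually_elim (rule mixture)
  from rescaled_inverse_tail_ereal_limit[OF assms(5) c_le_1 this assms(10,9) int v_lim]
  show ?thesis using v by fastforce
qed

end
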